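(* Let $\Omega$ be a transitive state space whose positive cone $V_+$ is self-dual with respect to $\langle\cdot,\cdot\rangle_{GL(\Omega)}$. Then for every nonzero effect $e\in\mathcal E_\Omega$, $$\frac{e}{\langle u,e\rangle_{GL(\Omega)}}\in\Omega,$$ and for every ideal observable $F=\{f_a\}_{a\in A}$ on $\Omega$, $$\left\langle f_a,\frac{f_a}{\langle u,f_a\rangle_{GL(\Omega)}}\right\rangle_{GL(\Omega)}=1\quad\text{for all }a\in A.$$
   Context: $V=\mathbb R^{N+1}$ with Euclidean inner product $(\cdot,\cdot)_E$. A state space $\Omega\subset V$ is a compact convex set with $\mathrm{span}(\Omega)=V$ and $0\notin\mathrm{aff}(\Omega)$; $V_+=\{\lambda\omega:\lambda\ge0,\omega\in\Omega\}$; the unit effect $u\in V^*$ satisfies $u(\omega)=1$ on $\Omega$; effects $\mathcal E_\Omega=\{e\in V^*:0\le e(\omega)\le1\ \forall\omega\in\Omega\}$; an observable with finite outcome set $A$ is a family of effects $\{f_a\}_{a\in A}$ with $\sum_af_a=u$ (trivial observable $\{u\}$ excluded). An effect is pure if it is an extreme point of $\mathcal E_\Omega$; indecomposable if $e\ne0$ and $e=e_1+e_2$ with $e_1,e_2\in\mathcal E_\Omega$ forces $e_1,e_2$ to be scalar multiples of $e$. $F=\{f_a\}$ is ideal if each $f_a$ equals $\sum_{i\in I_a}e_i$ or $u-\sum_{i\in I_a}e_i$ for a finite family of pure indecomposable effects. $GL(\Omega)$: group of linear bijections $T$ of $V$ with $T(\Omega)=\Omega$, $\mu$ its normalized Haar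 measure, $\langle x,y\rangle_{GL(\Omega)}=\int(Tx,Ty)_E\,d\mu(T)$. $\Omega$ is transitive if $GL(\Omega)$ acts transitively on the extreme points; then there is a unique $GL(\Omega)$-invariant state $\omega_M$, and by convention $(\omega_M,\omega_M)_E=1$. $V_+$ is self-dual w.r.t. $\langle\cdot,\cdot\rangle_{GL(\Omega)}$ if $V_+=\{y:\langle x,y\rangle_{GL(\Omega)}\ge0\ \forall x\in V_+\}$. Every linear functional (in particular every effect and $u$) is identified with the vector in $V$ representing it through $\langle\cdot,\cdot\rangle_{GL(\Omega)}$, and inner products of effects are computed between these vectors. *)

theory Defs
  imports "HOL-Analysis.Analysis" "HOL-Probability.Probability"
begin

definition state_space :: "(real^'n) set \<Rightarrow> bool" where
  "state_space \<Omega> \<longleftrightarrow> compact \<Omega> \<and> convex \<Omega> \<and> span \<Omega> = UNIV \<and> 0 \<notin> affine hull \<Omega>"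

definition GLset :: "(real^'n) set \<Rightarrow> (real^'n^'n) set" where
  "GLset \<Omega> = {T. invertible T \<and> (\<lambda>x. T *v x) ` \<Omega> = \<Omega>}"

text \<open>Normalized (left) Haar measure on the compact group GL(Omega), viewed as a Borel
  probability measure on the matrix space concentrated on GL(Omega).\<close>
definition haar_GL :: "(real^'n) set \<Rightarrow> (real^'n^'n) measure \<Rightarrow> bool" where
  "haar_GL \<Omega> \<mu> \<longleftrightarrow> prob_space \<mu> \<and> sets \<mu> = sets borel \<and>
     GLset \<Omega> \<in> sets \<mu> \<and> emeasure \<mu> (GLset \<Omega>) = 1 \<and>
     (\<forall>g \<in> GLset \<Omega>. \<forall>B \<in> sets \<mu>. emeasure \<mu> {T. g ** T \<in> B} = emeasure \<mu> B)"

definition ipGL :: "(real^'n^'n) measure \<Rightarrow> real^'n \<Rightarrow> real^'n \<Rightarrow> real" where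
  "ipGL \<mu> x y = (\<integral>T. (T *v x) \<bullet> (T *v y) \<partial>\<mu>)"

definition rep :: "(real^'n^'n) measure \<Rightarrow> (real^'n \<Rightarrow> real) \<Rightarrow> real^'n" where
  "rep \<mu> f = (THE y. \<forall>x. ipGL \<mu> y x = f x)"

definition transitive_ss :: "(real^'n) set \<Rightarrow> bool" where
  "transitive_ss \<Omega> \<longleftrightarrow> (\<forall>x y. x extreme_point_of \<Omega> \<longrightarrow> y extreme_point_of \<Omega> \<longrightarrow>
     (\<exists>T \<in> GLset \<Omega>. T *v x = y))"

definition pos_cone :: "(real^'n) set \<Rightarrow> (real^'n) set" where
  "pos_cone \<Omega> = {c *\<^sub>R w | c w. c \<ge> 0 \<and> w \<in> \<Omega>}"

definition self_dual_GL :: "(real^'n) set \<Rightarrow> (real^'n^'n) measure \<Rightarrow> bool" where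
  "self_dual_GL \<Omega> \<mu> \<longleftrightarrow> pos_cone \<Omega> = {y. \<forall>x \<in> pos_cone \<Omega>. ipGL \<mu> x y \<ge> 0}"

definition unit_effect :: "(real^'n) set \<Rightarrow> (real^'n \<Rightarrow> real) \<Rightarrow> bool" where
  "unit_effect \<Omega> u \<longleftrightarrow> linear u \<and> (\<forall>w \<in> \<Omega>. u w = 1)"

definition effects :: "(real^'n) set \<Rightarrow> (real^'n \<Rightarrow> real) set" where
  "effects \<Omega> = {e. linear e \<and> (\<forall>w \<in> \<Omega>. 0 \<le> e w \<and> e w \<le> 1)}"

text \<open>Pure effect = extreme point of the effect set (written out).\<close>
definition pure_effect :: "(real^'n) set \<Rightarrow> (real^'n \<Rightarrow> real) \<Rightarrow> bool" where
  "pure_effect \<Omega> e \<longleftrightarrow> e \<in> effects \<Omega> \<and>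
     \<not> (\<exists>a \<in> effects \<Omega>. \<exists>b \<in> effects \<Omega>. a \<noteq> b \<and>
          (\<exists>t. 0 < t \<and> t < 1 \<and> e = (\<lambda>x. (1 - t) * a x + t * b x)))"

definition indecomposable :: "(real^'n) set \<Rightarrow> (real^'n \<Rightarrow> real) \<Rightarrow> bool" where
  "indecomposable \<Omega> e \<longleftrightarrow> e \<in> effects \<Omega> \<and> e \<noteq> (\<lambda>x. 0) \<and>
     (\<forall>e1 \<in> effects \<Omega>. \<forall>e2 \<in> effects \<Omega>. e = (\<lambda>x. e1 x + e2 x) \<longrightarrow>
        (\<exists>c. e1 = (\<lambda>x. c * e x)) \<and> (\<exists>c. e2 = (\<lambda>x. c * e x)))"

definition observable :: "(real^'n) set \<Rightarrow> (real^'n \<Rightarrow> real) \<Rightarrow> 'a set \<Rightarrow> ('a \<Rightarrow> real^'n \<Rightarrow> real) \<Rightarrow> bool" where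
  "observable \<Omega> u A f \<longleftrightarrow> finite A \<and> (\<forall>a \<in> A. f a \<in> effects \<Omega>) \<and>
     (\<lambda>x. \<Sum>a\<in>A. f a x) = u \<and> \<not> (\<exists>a. A = {a})"

definition ideal_observable :: "(real^'n) set \<Rightarrow> (real^'n \<Rightarrow> real) \<Rightarrow> 'a set \<Rightarrow> ('a \<Rightarrow> real^'n \<Rightarrow> real) \<Rightarrow> bool" where
  "ideal_observable \<Omega> u A f \<longleftrightarrow> observable \<Omega> u A f \<and>
     (\<forall>a \<in> A. \<exists>es. (\<forall>e \<in> set es. pure_effect \<Omega> e \<and> indecomposable \<Omega> e) \<and>
        (f a = (\<lambda>x. \<Sum>e\<leftarrow>es. e x) \<or> f a = (\<lambda>x. u x - (\<Sum>e\<leftarrow>es. e x))))"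

end

(*
  Self-duality puts the vector representing a nonzero effect e in the cone: rep e = c w with
  c > 0 and w a state, and c = <u, e> because u is 1 on states; this is the first claim.
  If e is moreover indecomposable, w must be an extreme point, and since GL(Omega) preserves
  the inner product and acts transitively on extreme points, <w, .> attains its maximum over
  the states at w; purity then forces e w = 1. For a sum g <= u of such effects this gives
  g = 1 at every such w, hence <g, g> = <u, g>, and the same identity holds for u - g since
  <g, u - g> = 0. That is the second claim.

  The invariance of <.,.> needs right invariance of the Haar measure, which is only assumed
  left invariant; it is derived from a continuous formula for inversion on GL(Omega) and
  Fubini's theorem.
*)

theory Submission imports Defs begin

lemma continuous_on_matrix_vector_mult [continuous_intros]:
  "continuous_on A f \<Longrightarrow> continuous_on A (\<lambda>x. (f x :: real^'n^'m) *v v)"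
  unfolding matrix_vector_mult_def by (intro continuous_intros)

lemma continuous_on_transpose [continuous_intros]:
  "continuous_on A f \<Longrightarrow> continuous_on A (\<lambda>x. transpose (f x :: real^'n^'m))"
  unfolding transpose_def by (intro continuous_intros)

lemma continuous_on_matrix_mult [continuous_intros]:
  "continuous_on A f \<Longrightarrow> continuous_on A g \<Longrightarrow>
   continuous_on A (\<lambda>x. (f x :: real^'n^'m) ** (g x :: real^'k^'n))"
  unfolding matrix_matrix_mult_def by (intro continuous_intros)

lemma borel_measurable_continuous_compose:
  "h \<in> borel_measurable borel \<Longrightarrow> continuous_on UNIV f \<Longrightarrow> (\<lambda>x. h (f x)) \<in> borel_measurable borel"
  using measurable_compose[OF borel_measurable_continuous_onI] by blast

lemma linear_axis_expansion:
  fixes f :: "real^'n \<Rightarrow> real"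
  assumes "linear f"
  shows "f x = (\<Sum>i\<in>UNIV. x$i * f (axis i 1))"
proof -
  have "f x = f (\<Sum>i\<in>UNIV. x$i *\<^sub>R axis i 1)"
    using basis_expansion[of x] by (simp add: scalar_mult_eq_scaleR)
  also have "\<dots> = (\<Sum>i\<in>UNIV. x$i * f (axis i 1))"
    using assms by (simp add: linear_sum linear_scale)
  finally show ?thesis .
qed

lemma linear_sum_list_fun:
  "(\<forall>e\<in>set es. linear e) \<Longrightarrow> linear (\<lambda>x. \<Sum>e\<leftarrow>es. (e x :: real))"
  by (induction es) (simp_all add: linearI linear_compose_add)

lemma
  fixes A :: "'a::field^'n^'n"
  assumes "invertible A"
  shows matrix_inv_right: "A ** matrix_inv A = mat 1"
    and matrix_inv_left: "matrix_inv A ** A = mat 1"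
proof -
  have "\<exists>A'. A ** A' = mat 1 \<and> A' ** A = mat 1"
    using assms by (simp add: invertible_def)
  then have "A ** matrix_inv A = mat 1 \<and> matrix_inv A ** A = mat 1"
    unfolding matrix_inv_def by (rule someI_ex)
  then show "A ** matrix_inv A = mat 1" "matrix_inv A ** A = mat 1" by auto
qed

lemma matrix_inv_symmetric:
  fixes A :: "'a::field^'n^'n"
  assumes "invertible A" and "transpose A = A"
  shows "transpose (matrix_inv A) = matrix_inv A"
proof -
  have left: "transpose (matrix_inv A) ** A = mat 1"
    using matrix_inv_right[OF assms(1)] assms(2) by (metis matrix_transpose_mul transpose_mat)
  have "transpose (matrix_inv A) = (transpose (matrix_inv A) ** A) ** matrix_inv A"
    by (simp add: matrix_mul_assoc[symmetric] matrix_inv_right[OF assms(1)])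
  then show ?thesis by (simp add: left)
qed

locale haar_state_space =
  fixes \<Omega> :: "(real^'n) set" and \<mu> :: "(real^'n^'n) measure"
  assumes state_space: "state_space \<Omega>" and haar: "haar_GL \<Omega> \<mu>"
begin

lemma prob_space_haar: "prob_space \<mu>"
  using haar by (simp add: haar_GL_def)

lemma sets_haar: "sets \<mu> = sets borel"
  using haar by (simp add: haar_GL_def)

lemma space_haar: "space \<mu> = UNIV"
  using sets_eq_imp_space_eq[OF sets_haar] by simp

lemma AE_GLset: "AE T in \<mu>. T \<in> GLset \<Omega>"
proof -
  have "measure \<mu> (GLset \<Omega>) = 1"
    using haar by (simp add: haar_GL_def measure_def)
  then show ?thesis using prob_space.AE_prob_1[OF prob_space_haar] by blast
qed

lemma integral_AE_const:
  assumes "f \<in> borel_measurable \<mu>" and "AE x in \<mu>. f x = (c :: real)"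
  shows "integral\<^sup>L \<mu> f = c"
proof -
  have "integral\<^sup>L \<mu> f = (\<integral>x. c \<partial>\<mu>)"
    by (rule integral_cong_AE) (use assms in auto)
  also have "\<dots> = c" using prob_space.prob_space[OF prob_space_haar] by simp
  finally show ?thesis .
qed

lemma continuous_measurable_haar:
  "continuous_on UNIV f \<Longrightarrow> f \<in> borel_measurable \<mu>"
  using measurable_cong_sets[OF sets_haar refl] borel_measurable_continuous_onI by blast

lemma GLset_mult: "g \<in> GLset \<Omega> \<Longrightarrow> S \<in> GLset \<Omega> \<Longrightarrow> g ** S \<in> GLset \<Omega>"
proof -
  assume g: "g \<in> GLset \<Omega>" and S: "S \<in> GLset \<Omega>"
  have "(\<lambda>x. (g ** S) *v x) ` \<Omega> = (\<lambda>x. g *v x) ` ((\<lambda>x. S *v x) ` \<Omega>)"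
    by (auto simp: image_image matrix_vector_mul_assoc)
  then show ?thesis using g S by (auto simp: GLset_def invertible_mult)
qed

lemma GLset_left_inverse: "S \<in> GLset \<Omega> \<Longrightarrow> B ** S = mat 1 \<Longrightarrow> B \<in> GLset \<Omega>"
proof -
  assume S: "S \<in> GLset \<Omega>" and B: "B ** S = mat 1"
  then have "invertible B"
    using matrix_left_right_inverse invertible_def by blast
  moreover have "(\<lambda>x. B *v x) ` \<Omega> = (\<lambda>x. B *v x) ` ((\<lambda>x. S *v x) ` \<Omega>)"
    using S by (simp add: GLset_def)
  moreover have "\<dots> = \<Omega>"
    using B by (simp add: image_image matrix_vector_mul_assoc)
  ultimately show ?thesis by (simp add: GLset_def)
qed

lemma GLset_orbit_bounded: "\<exists>C. \<forall>T\<in>GLset \<Omega>. norm (T *v z) \<le> C"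
proof -
  obtain R where R: "\<forall>x\<in>\<Omega>. norm x \<le> R"
    using state_space compact_imp_bounded bounded_iff unfolding state_space_def by metis
  have "z \<in> span \<Omega>" using state_space by (simp add: state_space_def)
  then obtain S c where S: "finite S" "S \<subseteq> \<Omega>" and z: "(\<Sum>v\<in>S. c v *\<^sub>R v) = z"
    unfolding span_explicit by blast
  have "norm (T *v z) \<le> (\<Sum>v\<in>S. \<bar>c v\<bar> * R)" if T: "T \<in> GLset \<Omega>" for T
  proof -
    have "norm (T *v z) = norm (\<Sum>v\<in>S. c v *\<^sub>R (T *v v))"
      unfolding z[symmetric] by (simp add: linear_sum linear_scale)
    also have "\<dots> \<le> (\<Sum>v\<in>S. norm (c v *\<^sub>R (T *v v)))"
      by (rule norm_sum)
    also have "\<dots> \<le> (\<Sum>v\<in>S. \<bar>c v\<bar> * R)"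
    proof (rule sum_mono)
      fix v assume "v \<in> S"
      then have "T *v v \<in> \<Omega>" using T S(2) by (auto simp: GLset_def)
      then show "norm (c v *\<^sub>R (T *v v)) \<le> \<bar>c v\<bar> * R"
        using R by (simp add: mult_left_mono)
    qed
    finally show ?thesis .
  qed
  then show ?thesis by blast
qed

lemma integral_left_invariant:
  fixes h :: "real^'n^'n \<Rightarrow> real"
  assumes g: "g \<in> GLset \<Omega>" and h: "h \<in> borel_measurable borel"
  shows "(\<integral>S. h (g ** S) \<partial>\<mu>) = integral\<^sup>L \<mu> h"
proof -
  have mg: "(\<lambda>S. g ** S) \<in> \<mu> \<rightarrow>\<^sub>M borel"
    by (intro continuous_measurable_haar continuous_intros)
  have "distr \<mu> borel (\<lambda>S. g ** S) = \<mu>"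
  proof (rule measure_eqI)
    fix A assume "A \<in> sets (distr \<mu> borel ((**) g))"
    then have A: "A \<in> sets borel" by simp
    have "emeasure (distr \<mu> borel ((**) g)) A = emeasure \<mu> {T. g ** T \<in> A}"
      using emeasure_distr[OF mg A] by (simp add: space_haar vimage_def)
    also have "\<dots> = emeasure \<mu> A" using haar g A sets_haar by (simp add: haar_GL_def)
    finally show "emeasure (distr \<mu> borel ((**) g)) A = emeasure \<mu> A" .
  qed (simp add: sets_haar)
  then have "integral\<^sup>L \<mu> h = integral\<^sup>L (distr \<mu> borel (\<lambda>S. g ** S)) h" by simp
  also have "\<dots> = (\<integral>S. h (g ** S) \<partial>\<mu>)" by (rule integral_distr[OF mg h])
  finally show ?thesis by simp
qed

text \<open>The GL-invariant inner product is the case \<phi> = id; the case \<phi> = transpose is the one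
  that left invariance of \<mu> alone makes invariant.\<close>

definition avg_form :: "(real^'n^'n \<Rightarrow> real^'n^'n) \<Rightarrow> real^'n \<Rightarrow> real^'n \<Rightarrow> real" where
  "avg_form \<phi> x y = (\<integral>S. (\<phi> S *v x) \<bullet> (\<phi> S *v y) \<partial>\<mu>)"

definition admissible :: "(real^'n^'n \<Rightarrow> real^'n^'n) \<Rightarrow> bool" where
  "admissible \<phi> \<longleftrightarrow> continuous_on UNIV \<phi> \<and> (\<forall>z. \<exists>C. \<forall>T\<in>GLset \<Omega>. norm (\<phi> T *v z) \<le> C)
     \<and> (\<forall>T\<in>GLset \<Omega>. invertible (\<phi> T))"

lemma admissible_id: "admissible (\<lambda>S. S)"
  unfolding admissible_def using GLset_orbit_bounded by (auto simp: GLset_def continuous_on_id)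

lemma admissible_transpose: "admissible transpose"
proof -
  have "\<forall>i. \<exists>C. \<forall>T\<in>GLset \<Omega>. norm (T *v axis i 1) \<le> C"
    using GLset_orbit_bounded by blast
  then obtain C where C: "\<forall>i. \<forall>T\<in>GLset \<Omega>. norm (T *v axis i 1) \<le> C i"
    by (metis choice)
  have "norm (transpose T *v z) \<le> (\<Sum>i\<in>UNIV. norm z * C i)" if T: "T \<in> GLset \<Omega>" for T z
  proof -
    have "norm (transpose T *v z) \<le> (\<Sum>i\<in>UNIV. \<bar>(transpose T *v z) $ i\<bar>)"
      by (rule norm_le_l1_cart)
    also have "\<dots> \<le> (\<Sum>i\<in>UNIV. norm z * C i)"
    proof (rule sum_mono)
      fix i
      have "\<bar>(transpose T *v z) $ i\<bar> = \<bar>z \<bullet> (T *v axis i 1)\<bar>"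
        using dot_lmul_matrix[of z T "axis i 1"] by (simp add: inner_axis)
      also have "\<dots> \<le> norm z * norm (T *v axis i 1)"
        by (rule Cauchy_Schwarz_ineq2)
      also have "\<dots> \<le> norm z * C i" using C T by (simp add: mult_left_mono)
      finally show "\<bar>(transpose T *v z) $ i\<bar> \<le> norm z * C i" .
    qed
    finally show ?thesis .
  qed
  then have "\<forall>z. \<exists>C. \<forall>T\<in>GLset \<Omega>. norm (transpose T *v z) \<le> C" by blast
  then show ?thesis unfolding admissible_def
    using continuous_on_transpose[OF continuous_on_id] by (auto simp: GLset_def transpose_invertible)
qed

context
  fixes \<phi> assumes \<phi>: "admissible \<phi>"
begin

lemma avg_form_integrable: "integrable \<mu> (\<lambda>S. (\<phi> S *v x) \<bullet> (\<phi> S *v y))"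
proof -
  obtain Cx Cy where Cx: "\<forall>T\<in>GLset \<Omega>. norm (\<phi> T *v x) \<le> Cx"
    and Cy: "\<forall>T\<in>GLset \<Omega>. norm (\<phi> T *v y) \<le> Cy"
    using \<phi> unfolding admissible_def by metis
  have "AE S in \<mu>. norm ((\<phi> S *v x) \<bullet> (\<phi> S *v y)) \<le> Cx * Cy"
    using AE_GLset
  proof eventually_elim
    case (elim S)
    have "norm ((\<phi> S *v x) \<bullet> (\<phi> S *v y)) \<le> norm (\<phi> S *v x) * norm (\<phi> S *v y)"
      by (simp add: Cauchy_Schwarz_ineq2)
    also have "\<dots> \<le> Cx * Cy" using Cx Cy elim by (simp add: mult_mono')
    finally show ?case .
  qed
  moreover have "(\<lambda>S. (\<phi> S *v x) \<bullet> (\<phi> S *v y)) \<in> borel_measurable \<mu>"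
    using \<phi> unfolding admissible_def by (intro continuous_measurable_haar continuous_intros) auto
  moreover have "finite_measure \<mu>" using prob_space_haar by (simp add: prob_space_def)
  ultimately show ?thesis by (intro finite_measure.integrable_const_bound)
qed

lemma avg_form_commute: "avg_form \<phi> x y = avg_form \<phi> y x"
  unfolding avg_form_def by (simp add: inner_commute)

lemma bilinear_avg_form: "bilinear (avg_form \<phi>)"
proof -
  have left: "linear (\<lambda>x. avg_form \<phi> x y)" for y
    by (rule linearI) (simp_all add: avg_form_def matrix_vector_right_distrib inner_add_left
        matrix_vector_mult_scaleR Bochner_Integration.integral_add[OF avg_form_integrable avg_form_integrable])
  moreover have "linear (\<lambda>y. avg_form \<phi> x y)" for x
    using left[of x] by (simp only: avg_form_commute[of _ x])
  ultimately show ?thesis unfolding bilinear_def by blast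
qed

lemma avg_form_self_nonneg: "avg_form \<phi> x x \<ge> 0"
  unfolding avg_form_def by (intro integral_nonneg_AE) simp

lemma avg_form_self_eq_0: "avg_form \<phi> x x = 0 \<Longrightarrow> x = 0"
proof -
  assume "avg_form \<phi> x x = 0"
  then have "AE S in \<mu>. (\<phi> S *v x) \<bullet> (\<phi> S *v x) = 0"
    using integral_nonneg_eq_0_iff_AE[OF avg_form_integrable] unfolding avg_form_def by simp
  with AE_GLset have AE: "AE S in \<mu>. S \<in> GLset \<Omega> \<and> \<phi> S *v x = 0"
    by eventually_elim simp
  have "\<exists>S. S \<in> GLset \<Omega> \<and> \<phi> S *v x = 0"
  proof (rule ccontr)
    assume none: "\<not> (\<exists>S. S \<in> GLset \<Omega> \<and> \<phi> S *v x = 0)"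
    from AE have "AE S in \<mu>. False" by eventually_elim (use none in blast)
    then show False using prob_space.AE_False[OF prob_space_haar] by simp
  qed
  then obtain S where S: "S \<in> GLset \<Omega>" "\<phi> S *v x = 0" by blast
  then obtain B where "B ** \<phi> S = mat 1"
    using \<phi> unfolding admissible_def invertible_def by blast
  then have "x = B *v (\<phi> S *v x)" by (simp add: matrix_vector_mul_assoc)
  with S(2) show "x = 0" by simp
qed

definition gram :: "real^'n^'n" where
  "gram = (\<chi> i j. avg_form \<phi> (axis i 1) (axis j 1))"

lemma avg_form_gram: "avg_form \<phi> x y = x \<bullet> (gram *v y)"
proof -
  have row: "avg_form \<phi> (axis i 1) y = (\<Sum>j\<in>UNIV. y$j * avg_form \<phi> (axis i 1) (axis j 1))" for i
    using bilinear_avg_form by (intro linear_axis_expansion) (simp add: bilinear_def)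
  have "avg_form \<phi> x y = (\<Sum>i\<in>UNIV. x$i * avg_form \<phi> (axis i 1) y)"
    using bilinear_avg_form by (intro linear_axis_expansion) (simp add: bilinear_def)
  also have "\<dots> = x \<bullet> (gram *v y)"
    by (simp add: row gram_def inner_vec_def matrix_vector_mult_def mult.commute)
  finally show ?thesis .
qed

lemma gram_symmetric: "transpose gram = gram"
  unfolding gram_def transpose_def by (simp add: vec_eq_iff avg_form_commute)

lemma invertible_gram: "invertible gram"
proof -
  have "y = 0" if "gram *v y = 0" for y
    using that avg_form_self_eq_0 by (simp add: avg_form_gram)
  then show ?thesis using matrix_left_invertible_ker invertible_left_inverse by blast
qed

end

lemma ipGL_eq_avg_form: "ipGL \<mu> = avg_form (\<lambda>S. S)"
  by (simp add: fun_eq_iff ipGL_def avg_form_def)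

lemma bilinear_ipGL: "bilinear (ipGL \<mu>)"
  by (simp add: ipGL_eq_avg_form bilinear_avg_form[OF admissible_id])

lemma ipGL_commute: "ipGL \<mu> x y = ipGL \<mu> y x"
  by (simp add: ipGL_eq_avg_form avg_form_commute[OF admissible_id])

lemma ipGL_self_nonneg: "ipGL \<mu> x x \<ge> 0"
  by (simp add: ipGL_eq_avg_form avg_form_self_nonneg[OF admissible_id])

lemma ipGL_self_eq_0: "ipGL \<mu> x x = 0 \<Longrightarrow> x = 0"
  by (simp add: ipGL_eq_avg_form avg_form_self_eq_0[OF admissible_id])

lemma ipGL_left_cancel: "(\<And>x. ipGL \<mu> p x = ipGL \<mu> q x) \<Longrightarrow> p = q"
proof -
  assume "\<And>x. ipGL \<mu> p x = ipGL \<mu> q x"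
  then have "ipGL \<mu> (p - q) (p - q) = 0" by (simp add: bilinear_lsub[OF bilinear_ipGL])
  then have "p - q = 0" by (rule ipGL_self_eq_0)
  then show "p = q" by simp
qed

lemma ipGL_represents_linear:
  assumes f: "linear f"
  shows "\<exists>y. \<forall>x. ipGL \<mu> y x = f x"
proof -
  define G where "G = gram (\<lambda>S. S)"
  define a where "a = (\<chi> i. f (axis i 1))"
  have "ipGL \<mu> (matrix_inv G *v a) x = f x" for x
  proof -
    have "ipGL \<mu> (matrix_inv G *v a) x = ipGL \<mu> x (matrix_inv G *v a)"
      by (rule ipGL_commute)
    also have "\<dots> = x \<bullet> ((G ** matrix_inv G) *v a)"
      by (simp add: ipGL_eq_avg_form avg_form_gram[OF admissible_id] G_def matrix_vector_mul_assoc)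
    also have "\<dots> = f x"
      using linear_axis_expansion[OF f, of x]
      by (simp add: G_def matrix_inv_right[OF invertible_gram[OF admissible_id]] a_def inner_vec_def)
    finally show ?thesis .
  qed
  then show ?thesis by blast
qed

lemma rep_ipGL: "linear f \<Longrightarrow> ipGL \<mu> (rep \<mu> f) x = f x"
proof -
  assume "linear f"
  then have "\<exists>!y. \<forall>x. ipGL \<mu> y x = f x"
    using ipGL_represents_linear ipGL_left_cancel by metis
  then have "\<forall>x. ipGL \<mu> (rep \<mu> f) x = f x" unfolding rep_def by (rule theI')
  then show ?thesis by blast
qed

lemma rep_swap: "linear f \<Longrightarrow> linear g \<Longrightarrow> f (rep \<mu> g) = g (rep \<mu> f)"
  by (metis rep_ipGL ipGL_commute)

text \<open>With K the Gram matrix of the transposed average, g K g^T = K on GL(\<Omega>), so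
  S^-1 = K S^T K^-1 there: a formula for inversion that is continuous on all matrices.\<close>

lemma avg_form_transpose_invariant:
  assumes g: "g \<in> GLset \<Omega>"
  shows "avg_form transpose (transpose g *v x) (transpose g *v y) = avg_form transpose x y"
proof -
  define h where "h P = (transpose P *v x) \<bullet> (transpose P *v y)" for P :: "real^'n^'n"
  have h: "h \<in> borel_measurable borel" unfolding h_def
    by (intro borel_measurable_continuous_onI continuous_intros)
  have "(transpose S *v (transpose g *v x)) \<bullet> (transpose S *v (transpose g *v y)) = h (g ** S)" for S
    unfolding h_def by (simp only: matrix_transpose_mul matrix_vector_mul_assoc)
  then have "avg_form transpose (transpose g *v x) (transpose g *v y) = (\<integral>S. h (g ** S) \<partial>\<mu>)"
    unfolding avg_form_def by (simp only:)
  also have "\<dots> = integral\<^sup>L \<mu> h" by (rule integral_left_invariant[OF g h])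
  also have "\<dots> = avg_form transpose x y" by (simp add: avg_form_def h_def[abs_def])
  finally show ?thesis .
qed

lemma gram_transpose_conj:
  assumes g: "g \<in> GLset \<Omega>"
  shows "g ** gram transpose ** transpose g = gram transpose"
proof -
  have "x \<bullet> ((g ** gram transpose ** transpose g) *v y) = x \<bullet> (gram transpose *v y)" for x y
  proof -
    have "x \<bullet> ((g ** gram transpose ** transpose g) *v y)
        = (transpose g *v x) \<bullet> (gram transpose *v (transpose g *v y))"
      by (simp only: matrix_vector_mul_assoc[symmetric] dot_lmul_matrix[symmetric]
          transpose_matrix_vector)
    also have "\<dots> = avg_form transpose (transpose g *v x) (transpose g *v y)"
      by (rule avg_form_gram[OF admissible_transpose, symmetric])
    also have "\<dots> = x \<bullet> (gram transpose *v y)"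
      unfolding avg_form_transpose_invariant[OF g] by (rule avg_form_gram[OF admissible_transpose])
    finally show ?thesis .
  qed
  then show ?thesis unfolding matrix_eq using vector_eq_ldot by blast
qed

definition GL_inverse :: "real^'n^'n \<Rightarrow> real^'n^'n" where
  "GL_inverse S = gram transpose ** transpose S ** matrix_inv (gram transpose)"

lemma GL_inverse_right:
  assumes S: "S \<in> GLset \<Omega>"
  shows "S ** GL_inverse S = mat 1"
proof -
  have "S ** GL_inverse S = (S ** gram transpose ** transpose S) ** matrix_inv (gram transpose)"
    by (simp only: GL_inverse_def matrix_mul_assoc)
  then show ?thesis
    by (simp only: gram_transpose_conj[OF S] matrix_inv_right[OF invertible_gram[OF admissible_transpose]])
qed

lemma GL_inverse_left: "S \<in> GLset \<Omega> \<Longrightarrow> GL_inverse S ** S = mat 1"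
  using GL_inverse_right matrix_left_right_inverse by blast

lemma GL_inverse_in_GLset: "S \<in> GLset \<Omega> \<Longrightarrow> GL_inverse S \<in> GLset \<Omega>"
  using GL_inverse_left GLset_left_inverse by blast

lemma GL_inverse_involution: "GL_inverse (GL_inverse S) = S"
proof -
  have K: "invertible (gram transpose)" "transpose (gram transpose) = gram transpose"
    using invertible_gram gram_symmetric admissible_transpose by blast+
  have "GL_inverse (GL_inverse S)
      = (gram transpose ** matrix_inv (gram transpose)) ** S ** (gram transpose ** matrix_inv (gram transpose))"
    by (simp add: GL_inverse_def matrix_transpose_mul K matrix_inv_symmetric matrix_mul_assoc)
  then show ?thesis by (simp add: matrix_inv_right[OF K(1)])
qed

lemma GL_inverse_mult: "GL_inverse (A ** B) = GL_inverse B ** GL_inverse A"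
proof -
  have "GL_inverse B ** GL_inverse A = gram transpose ** transpose B
      ** (matrix_inv (gram transpose) ** gram transpose) ** transpose A ** matrix_inv (gram transpose)"
    by (simp add: GL_inverse_def matrix_mul_assoc)
  then show ?thesis
    by (simp add: matrix_inv_left[OF invertible_gram[OF admissible_transpose]] GL_inverse_def
        matrix_transpose_mul matrix_mul_assoc)
qed

lemma continuous_on_GL_inverse: "continuous_on UNIV GL_inverse"
  unfolding GL_inverse_def[abs_def] by (intro continuous_intros)

lemma measurable_pair_haar:
  fixes h :: "real^'n^'n \<Rightarrow> real"
    and c :: "(real^'n^'n) \<times> (real^'n^'n) \<Rightarrow> real^'n^'n"
  assumes h: "h \<in> borel_measurable borel" and c: "continuous_on UNIV c"
  shows "(\<lambda>z. h (c z)) \<in> borel_measurable (\<mu> \<Otimes>\<^sub>M \<mu>)"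
proof -
  have "sets (\<mu> \<Otimes>\<^sub>M \<mu>) = sets (borel \<Otimes>\<^sub>M borel)"
    by (rule sets_pair_measure_cong[OF sets_haar sets_haar])
  also have "\<dots> = sets (borel :: ((real^'n^'n) \<times> (real^'n^'n)) measure)"
    by (simp only: borel_prod)
  finally have "sets (\<mu> \<Otimes>\<^sub>M \<mu>) = sets (borel :: ((real^'n^'n) \<times> (real^'n^'n)) measure)" .
  moreover have "(\<lambda>z. h (c z)) \<in> borel_measurable borel"
    by (rule borel_measurable_continuous_compose[OF h c])
  ultimately show ?thesis using measurable_cong_sets by blast
qed

lemma integral_GL_inverse_mult_right:
  fixes h :: "real^'n^'n \<Rightarrow> real"
  assumes h: "h \<in> borel_measurable borel" and R: "R \<in> GLset \<Omega>"
  shows "(\<integral>S. h (GL_inverse S ** R) \<partial>\<mu>) = (\<integral>S. h (GL_inverse S) \<partial>\<mu>)"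
proof -
  define h' where "h' P = h (GL_inverse P ** R)" for P
  have h': "h' \<in> borel_measurable borel" unfolding h'_def
    by (intro borel_measurable_continuous_compose[OF h] continuous_intros continuous_on_GL_inverse)
  have "(\<integral>S. h (GL_inverse S ** R) \<partial>\<mu>) = integral\<^sup>L \<mu> h'"
    by (simp add: h'_def[abs_def])
  also have "\<dots> = (\<integral>S. h' (R ** S) \<partial>\<mu>)"
    by (rule integral_left_invariant[OF R h', symmetric])
  also have "\<dots> = (\<integral>S. h (GL_inverse S) \<partial>\<mu>)"
    by (simp add: h'_def GL_inverse_mult matrix_mul_assoc[symmetric] GL_inverse_left[OF R])
  finally show ?thesis .
qed

text \<open>Fubini: integrating h (S^-1 R) over (S, R) in both orders gives the two sides.\<close>

lemma integral_GL_inverse: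
  fixes h :: "real^'n^'n \<Rightarrow> real"
  assumes h: "h \<in> borel_measurable borel" and bounded: "\<And>P. \<bar>h P\<bar> \<le> B"
  shows "(\<integral>S. h (GL_inverse S) \<partial>\<mu>) = integral\<^sup>L \<mu> h"
proof -
  have sigma_finite_haar: "sigma_finite_measure \<mu>"
    by (simp add: prob_space_imp_sigma_finite prob_space_haar)
  interpret pair_sigma_finite \<mu> \<mu>
    by (simp add: pair_sigma_finite_def sigma_finite_haar)
  have meas: "(\<lambda>(S, R). h (GL_inverse S ** R)) \<in> borel_measurable (\<mu> \<Otimes>\<^sub>M \<mu>)"
             "(\<lambda>(R, S). h (GL_inverse S ** R)) \<in> borel_measurable (\<mu> \<Otimes>\<^sub>M \<mu>)"
    using measurable_pair_haar[OF h, of "\<lambda>z. GL_inverse (fst z) ** snd z"]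
      measurable_pair_haar[OF h, of "\<lambda>z. GL_inverse (snd z) ** fst z"]
    by (simp_all add: case_prod_beta continuous_on_compose2[OF continuous_on_GL_inverse]
        continuous_intros)
  have "integrable (\<mu> \<Otimes>\<^sub>M \<mu>) (\<lambda>(S, R). h (GL_inverse S ** R))"
  proof (rule finite_measure.integrable_const_bound[OF _ _ meas(1)])
    show "finite_measure (\<mu> \<Otimes>\<^sub>M \<mu>)"
      using prob_space_pair[OF prob_space_haar prob_space_haar] by (simp add: prob_space_def)
  qed (use bounded in \<open>auto simp: case_prod_beta\<close>)
  then have "(\<integral>R. (\<integral>S. h (GL_inverse S ** R) \<partial>\<mu>) \<partial>\<mu>) = (\<integral>S. (\<integral>R. h (GL_inverse S ** R) \<partial>\<mu>) \<partial>\<mu>)"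
    by (rule Fubini_integral)
  moreover have "(\<integral>R. (\<integral>S. h (GL_inverse S ** R) \<partial>\<mu>) \<partial>\<mu>) = (\<integral>S. h (GL_inverse S) \<partial>\<mu>)"
  proof (rule integral_AE_const)
    show "(\<lambda>R. \<integral>S. h (GL_inverse S ** R) \<partial>\<mu>) \<in> borel_measurable \<mu>"
      by (rule sigma_finite_measure.borel_measurable_lebesgue_integral[OF sigma_finite_haar meas(2)])
    show "AE R in \<mu>. (\<integral>S. h (GL_inverse S ** R) \<partial>\<mu>) = (\<integral>S. h (GL_inverse S) \<partial>\<mu>)"
      using AE_GLset by eventually_elim (rule integral_GL_inverse_mult_right[OF h])
  qed
  moreover have "(\<integral>S. (\<integral>R. h (GL_inverse S ** R) \<partial>\<mu>) \<partial>\<mu>) = integral\<^sup>L \<mu> h"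
  proof (rule integral_AE_const)
    show "(\<lambda>S. \<integral>R. h (GL_inverse S ** R) \<partial>\<mu>) \<in> borel_measurable \<mu>"
      by (rule sigma_finite_measure.borel_measurable_lebesgue_integral[OF sigma_finite_haar meas(1)])
    show "AE S in \<mu>. (\<integral>R. h (GL_inverse S ** R) \<partial>\<mu>) = integral\<^sup>L \<mu> h"
      using AE_GLset by eventually_elim (rule integral_left_invariant[OF GL_inverse_in_GLset h])
  qed
  ultimately show ?thesis by simp
qed

lemma integral_right_invariant:
  fixes h :: "real^'n^'n \<Rightarrow> real"
  assumes h: "h \<in> borel_measurable borel" and bounded: "\<And>P. \<bar>h P\<bar> \<le> B"
    and T: "T \<in> GLset \<Omega>"
  shows "(\<integral>S. h (S ** T) \<partial>\<mu>) = integral\<^sup>L \<mu> h"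
proof -
  have "(\<integral>S. h (S ** T) \<partial>\<mu>) = (\<integral>S. h (GL_inverse (GL_inverse S) ** T) \<partial>\<mu>)"
    by (simp add: GL_inverse_involution)
  also have "\<dots> = (\<integral>S. h (GL_inverse S ** T) \<partial>\<mu>)"
    using bounded
    by (intro integral_GL_inverse borel_measurable_continuous_compose[OF h] continuous_intros
        continuous_on_GL_inverse)
  also have "\<dots> = (\<integral>S. h (GL_inverse S) \<partial>\<mu>)"
    by (rule integral_GL_inverse_mult_right[OF h T])
  also have "\<dots> = integral\<^sup>L \<mu> h"
    by (rule integral_GL_inverse[OF h bounded])
  finally show ?thesis .
qed

lemma ipGL_invariant:
  assumes T: "T \<in> GLset \<Omega>"
  shows "ipGL \<mu> (T *v x) (T *v y) = ipGL \<mu> x y"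
proof -
  obtain Cx Cy where Cx: "\<forall>P\<in>GLset \<Omega>. norm (P *v x) \<le> Cx"
    and Cy: "\<forall>P\<in>GLset \<Omega>. norm (P *v y) \<le> Cy"
    using GLset_orbit_bounded by metis
  define h where "h P = (P *v x) \<bullet> (P *v y)" for P :: "real^'n^'n"
  \<comment> \<open>a bounded truncation of h that agrees with h on GL(\<Omega>)\<close>
  define h' where "h' P = max (- (Cx * Cy)) (min (Cx * Cy) (h P))" for P
  have h: "continuous_on UNIV h" unfolding h_def by (intro continuous_intros)
  have h': "continuous_on UNIV h'" unfolding h'_def by (intro continuous_intros h)
  have hT: "continuous_on UNIV (\<lambda>S. h (S ** T))" "continuous_on UNIV (\<lambda>S. h' (S ** T))"
    by (rule continuous_on_compose2[OF h _ subset_UNIV] continuous_on_compose2[OF h' _ subset_UNIV],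
        intro continuous_intros)+
  have "h P = h' P" if "P \<in> GLset \<Omega>" for P
  proof -
    have "\<bar>h P\<bar> \<le> norm (P *v x) * norm (P *v y)"
      unfolding h_def by (rule Cauchy_Schwarz_ineq2)
    also have "\<dots> \<le> Cx * Cy" using Cx Cy that by (simp add: mult_mono')
    finally show ?thesis unfolding h'_def by auto
  qed
  then have AE: "AE S in \<mu>. h (S ** T) = h' (S ** T)" "AE S in \<mu>. h' S = h S"
    using AE_GLset by (auto elim!: eventually_mono intro: GLset_mult[OF _ T])
  have "ipGL \<mu> (T *v x) (T *v y) = (\<integral>S. h (S ** T) \<partial>\<mu>)"
    by (simp add: ipGL_def h_def matrix_vector_mul_assoc)
  also have "\<dots> = (\<integral>S. h' (S ** T) \<partial>\<mu>)"
    using AE(1) hT by (intro integral_cong_AE continuous_measurable_haar) auto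
  also have "\<dots> = integral\<^sup>L \<mu> h'"
  proof (rule integral_right_invariant[OF borel_measurable_continuous_onI[OF h'] _ T])
    show "\<bar>h' P\<bar> \<le> \<bar>Cx * Cy\<bar>" for P unfolding h'_def by auto
  qed
  also have "\<dots> = integral\<^sup>L \<mu> h"
    using AE(2) h h' by (intro integral_cong_AE continuous_measurable_haar) auto
  also have "\<dots> = ipGL \<mu> x y" by (simp add: ipGL_def h_def[abs_def])
  finally show ?thesis .
qed

end

lemma effects_linear: "e \<in> effects \<Omega> \<Longrightarrow> linear e"
  and effects_bounds: "e \<in> effects \<Omega> \<Longrightarrow> w \<in> \<Omega> \<Longrightarrow> 0 \<le> e w \<and> e w \<le> 1"
  unfolding effects_def by auto

lemma effects_summands:
  assumes e: "e \<in> effects \<Omega>" and split: "e = (\<lambda>x. e1 x + e2 x)"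
    and "linear e1" "linear e2" and "\<forall>x\<in>\<Omega>. 0 \<le> e1 x" "\<forall>x\<in>\<Omega>. 0 \<le> e2 x"
  shows "e1 \<in> effects \<Omega>" and "e2 \<in> effects \<Omega>"
proof -
  have "e1 x + e2 x \<le> 1" if "x \<in> \<Omega>" for x
    using effects_bounds[OF e that] split by simp
  then show "e1 \<in> effects \<Omega>" "e2 \<in> effects \<Omega>"
    using assms(3-) unfolding effects_def by fastforce+
qed

lemma pure_effect_max_eq_1:
  assumes pure: "pure_effect \<Omega> e" and w: "w \<in> \<Omega>"
    and max: "\<And>x. x \<in> \<Omega> \<Longrightarrow> e x \<le> e w" and pos: "e w > 0"
  shows "e w = 1"
proof (rule ccontr)
  assume "e w \<noteq> 1"
  then have less: "e w < 1" using pure w by (auto simp: pure_effect_def dest: effects_bounds)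
  have e: "e \<in> effects \<Omega>" using pure by (simp add: pure_effect_def)
  define b where "b x = e x / e w" for x
  have "(\<lambda>x. 0) \<in> effects \<Omega>" by (simp add: effects_def linearI)
  moreover have "b \<in> effects \<Omega>"
  proof -
    have "linear b" unfolding b_def[abs_def] using effects_linear[OF e]
      by (intro linearI) (simp_all add: linear_add linear_scale add_divide_distrib)
    moreover have "0 \<le> b x \<and> b x \<le> 1" if "x \<in> \<Omega>" for x
      using effects_bounds[OF e that] max[OF that] pos by (simp add: b_def)
    ultimately show ?thesis by (simp add: effects_def)
  qed
  moreover have "(\<lambda>x. 0) \<noteq> b"
    using pos by (metis b_def divide_self less_irrefl zero_neq_one)
  moreover have "e = (\<lambda>x. (1 - e w) * 0 + e w * b x)"
    using pos by (simp add: b_def)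
  ultimately show False
    using pure pos less unfolding pure_effect_def by blast
qed

lemma state_in_pos_cone: "w \<in> \<Omega> \<Longrightarrow> w \<in> pos_cone \<Omega>"
  unfolding pos_cone_def by (intro CollectI exI[of _ 1] exI[of _ w]) simp

locale transitive_self_dual = haar_state_space +
  fixes u
  assumes transitive: "transitive_ss \<Omega>" and self_dual: "self_dual_GL \<Omega> \<mu>"
    and unit: "unit_effect \<Omega> u"
begin

lemma linear_u: "linear u"
  using unit by (simp add: unit_effect_def)

lemma u_scaleR_state: "w \<in> \<Omega> \<Longrightarrow> u (c *\<^sub>R w) = c"
  using unit linear_scale[OF linear_u] by (simp add: unit_effect_def)

lemma zero_notin_states: "0 \<notin> \<Omega>"
  using state_space hull_subset[of \<Omega> affine] by (auto simp: state_space_def)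

lemma scaled_states_eq:
  assumes "a \<in> \<Omega>" "w \<in> \<Omega>" "s \<noteq> 0" and eq: "s *\<^sub>R a = r *\<^sub>R w"
  shows "a = w"
proof -
  have "s = r" using arg_cong[OF eq, of u] assms(1,2) by (simp add: u_scaleR_state)
  then show ?thesis using eq \<open>s \<noteq> 0\<close> by simp
qed

lemma ipGL_states_nonneg:
  assumes a: "a \<in> \<Omega>" and x: "x \<in> \<Omega>"
  shows "0 \<le> ipGL \<mu> a x"
proof -
  have "a \<in> {y. \<forall>x\<in>pos_cone \<Omega>. 0 \<le> ipGL \<mu> x y}"
    using self_dual state_in_pos_cone[OF a] by (simp add: self_dual_GL_def)
  then have "0 \<le> ipGL \<mu> x a" using state_in_pos_cone[OF x] by simp
  then show ?thesis using ipGL_commute[of a x] by linarith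
qed

lemma ipGL_scaled_states_nonneg: "0 \<le> s \<Longrightarrow> a \<in> \<Omega> \<Longrightarrow> x \<in> \<Omega> \<Longrightarrow> 0 \<le> ipGL \<mu> (s *\<^sub>R a) x"
  using ipGL_states_nonneg by (simp add: bilinear_lmul[OF bilinear_ipGL])

lemma rep_effect_in_pos_cone:
  assumes e: "e \<in> effects \<Omega>"
  shows "rep \<mu> e \<in> pos_cone \<Omega>"
proof -
  have "0 \<le> ipGL \<mu> x (rep \<mu> e)" if x: "x \<in> pos_cone \<Omega>" for x
  proof -
    obtain c w where "x = c *\<^sub>R w" "c \<ge> 0" "w \<in> \<Omega>"
      using x unfolding pos_cone_def by blast
    moreover have "ipGL \<mu> x (rep \<mu> e) = e x"
      using rep_ipGL[OF effects_linear[OF e], of x] ipGL_commute[of x "rep \<mu> e"] by linarith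
    ultimately show ?thesis
      using effects_bounds[OF e] by (simp add: linear_scale[OF effects_linear[OF e]])
  qed
  then show ?thesis using self_dual unfolding self_dual_GL_def by blast
qed

lemma rep_nonzero_effect:
  assumes e: "e \<in> effects \<Omega>" and nonzero: "e \<noteq> (\<lambda>x. 0)"
  obtains c w where "c > 0" "w \<in> \<Omega>" "rep \<mu> e = c *\<^sub>R w"
proof -
  obtain c w where cw: "rep \<mu> e = c *\<^sub>R w" "c \<ge> 0" "w \<in> \<Omega>"
    using rep_effect_in_pos_cone[OF e] unfolding pos_cone_def by blast
  have "c \<noteq> 0"
  proof
    assume "c = 0"
    then have "e x = 0" for x
      using rep_ipGL[OF effects_linear[OF e], of x] cw bilinear_lzero[OF bilinear_ipGL] by simp
    then show False using nonzero by auto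
  qed
  then have "c > 0" using cw(2) by simp
  then show thesis using that cw by blast
qed

text \<open>By transitivity all extreme points w have the same \<langle>w, w\<rangle>, so
  \<langle>w, w'\<rangle> \<le> (\<langle>w, w\<rangle> + \<langle>w', w'\<rangle>) / 2 = \<langle>w, w\<rangle>; Krein-Milman extends this to all of \<Omega>.\<close>

lemma ipGL_le_extreme:
  assumes w: "w extreme_point_of \<Omega>" and x: "x \<in> \<Omega>"
  shows "ipGL \<mu> w x \<le> ipGL \<mu> w w"
proof -
  let ?H = "{x. ipGL \<mu> w x \<le> ipGL \<mu> w w}"
  have "w' \<in> ?H" if w': "w' extreme_point_of \<Omega>" for w'
  proof -
    obtain T where "T \<in> GLset \<Omega>" "T *v w = w'"
      using transitive w w' unfolding transitive_ss_def by blast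
    then have "ipGL \<mu> w' w' = ipGL \<mu> w w" using ipGL_invariant[of T w w] by simp
    moreover have "0 \<le> ipGL \<mu> (w - w') (w - w')" by (rule ipGL_self_nonneg)
    ultimately show ?thesis
      by (simp add: bilinear_lsub[OF bilinear_ipGL] bilinear_rsub[OF bilinear_ipGL]
          ipGL_commute[of w' w])
  qed
  moreover have "convex ?H"
    unfolding convex_def
    by (auto simp: bilinear_radd[OF bilinear_ipGL] bilinear_rmul[OF bilinear_ipGL]
        intro!: convex_bound_le)
  ultimately have "convex hull {x. x extreme_point_of \<Omega>} \<subseteq> ?H"
    by (intro hull_minimal) auto
  moreover have "compact \<Omega>" "convex \<Omega>" using state_space by (auto simp: state_space_def)
  ultimately show ?thesis using x Krein_Milman_Minkowski by blast
qed

lemma rep_indecomposable_extreme: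
  assumes ind: "indecomposable \<Omega> e" and c: "c > 0" and w: "w \<in> \<Omega>" and rep: "rep \<mu> e = c *\<^sub>R w"
  shows "w extreme_point_of \<Omega>"
proof -
  have e: "e \<in> effects \<Omega>" using ind by (simp add: indecomposable_def)
  have e_ipGL: "e x = ipGL \<mu> (rep \<mu> e) x" for x
    by (simp add: rep_ipGL effects_linear[OF e])
  have lin: "linear (\<lambda>x. ipGL \<mu> p x)" for p
    using bilinear_ipGL by (simp add: bilinear_def)
  have summand: "a = w"
    if a: "a \<in> \<Omega>" and s: "s > 0" and split: "e = (\<lambda>x. ipGL \<mu> (s *\<^sub>R a) x + ipGL \<mu> p x)"
      and p: "\<forall>x\<in>\<Omega>. 0 \<le> ipGL \<mu> p x" for a s p
  proof -
    have "(\<lambda>x. ipGL \<mu> (s *\<^sub>R a) x) \<in> effects \<Omega>" "(\<lambda>x. ipGL \<mu> p x) \<in> effects \<Omega>"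
      using effects_summands[OF e split lin lin] ipGL_scaled_states_nonneg[OF _ a] s p by auto
    then obtain c' where c': "(\<lambda>x. ipGL \<mu> (s *\<^sub>R a) x) = (\<lambda>x. c' * e x)"
      using ind split unfolding indecomposable_def by blast
    have "ipGL \<mu> (s *\<^sub>R a) x = ipGL \<mu> ((c' * c) *\<^sub>R w) x" for x
      using fun_cong[OF c', of x] by (simp add: e_ipGL rep bilinear_lmul[OF bilinear_ipGL])
    then have eq: "s *\<^sub>R a = (c' * c) *\<^sub>R w" by (rule ipGL_left_cancel)
    show "a = w" using s by (intro scaled_states_eq[OF a w _ eq]) simp
  qed
  show ?thesis unfolding extreme_point_of_def
  proof (intro conjI w ballI notI)
    fix a b assume a: "a \<in> \<Omega>" and b: "b \<in> \<Omega>" and "w \<in> open_segment a b"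
    then obtain t where "a \<noteq> b" "0 < t" "t < 1" and wt: "w = (1 - t) *\<^sub>R a + t *\<^sub>R b"
      by (auto simp: in_segment)
    define p q where "p = (c * (1 - t)) *\<^sub>R a" and "q = (c * t) *\<^sub>R b"
    have pq: "\<forall>x\<in>\<Omega>. 0 \<le> ipGL \<mu> p x" "\<forall>x\<in>\<Omega>. 0 \<le> ipGL \<mu> q x"
      unfolding p_def q_def using ipGL_scaled_states_nonneg a b c \<open>t < 1\<close> \<open>0 < t\<close> by simp_all
    have split: "e = (\<lambda>x. ipGL \<mu> p x + ipGL \<mu> q x)"
      by (simp add: fun_eq_iff e_ipGL rep wt p_def q_def scaleR_add_right bilinear_ladd[OF bilinear_ipGL])
    have "a = w"
      using summand[of a "c * (1 - t)" q] a pq(2) split c \<open>t < 1\<close> by (simp add: p_def)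
    moreover have "b = w"
      using summand[of b "c * t" p] b pq(1) split c \<open>0 < t\<close> by (simp add: q_def add.commute)
    ultimately show False using \<open>a \<noteq> b\<close> by simp
  qed
qed

lemma pure_indecomposable_rep:
  assumes pure: "pure_effect \<Omega> e" and ind: "indecomposable \<Omega> e"
  obtains c w where "c > 0" "w \<in> \<Omega>" "rep \<mu> e = c *\<^sub>R w" "e w = 1"
proof -
  have e: "e \<in> effects \<Omega>" "e \<noteq> (\<lambda>x. 0)" using ind by (auto simp: indecomposable_def)
  obtain c w where c: "c > 0" and w: "w \<in> \<Omega>" and rep: "rep \<mu> e = c *\<^sub>R w"
    using rep_nonzero_effect[OF e] .
  have e_ipGL: "e x = c * ipGL \<mu> w x" for x
    using rep_ipGL[OF effects_linear[OF e(1)], of x] rep by (simp add: bilinear_lmul[OF bilinear_ipGL])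
  have "w \<noteq> 0" using w zero_notin_states by blast
  then have "ipGL \<mu> w w \<noteq> 0" using ipGL_self_eq_0 by blast
  then have "ipGL \<mu> w w > 0" using ipGL_self_nonneg[of w] by simp
  moreover have "w extreme_point_of \<Omega>" by (rule rep_indecomposable_extreme[OF ind c w rep])
  ultimately have "e w = 1"
    using pure_effect_max_eq_1[OF pure w] ipGL_le_extreme c by (simp add: e_ipGL)
  then show thesis using that c w rep by blast
qed

lemma sum_pure_indecomposable_self_eq_unit:
  assumes es: "\<forall>e\<in>set es. pure_effect \<Omega> e \<and> indecomposable \<Omega> e"
    and le_1: "\<forall>x\<in>\<Omega>. (\<Sum>e\<leftarrow>es. e x) \<le> 1"
  defines "g \<equiv> \<lambda>x. \<Sum>e\<leftarrow>es. e x"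
  shows "g (rep \<mu> g) = u (rep \<mu> g)"
proof -
  have effects: "\<And>e. e \<in> set es \<Longrightarrow> e \<in> effects \<Omega>"
    using es by (simp add: pure_effect_def)
  have linear: "\<forall>e\<in>set es. linear e" using effects effects_linear by blast
  have g: "linear g" unfolding g_def by (rule linear_sum_list_fun[OF linear])
  have g_rep: "g (rep \<mu> e) = u (rep \<mu> e)" if e: "e \<in> set es" for e
  proof -
    obtain c w where rep: "rep \<mu> e = c *\<^sub>R w" and w: "w \<in> \<Omega>" and "e w = 1"
      using pure_indecomposable_rep es e by metis
    moreover have "e w \<le> g w"
      unfolding g_def using e effects effects_bounds w by (intro member_le_sum_list) auto
    ultimately have "g w = 1" using le_1 w by (fastforce simp: g_def)
    then show ?thesis by (simp add: rep linear_scale[OF g] u_scaleR_state[OF w])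
  qed
  have "g (rep \<mu> g) = (\<Sum>e\<leftarrow>es. e (rep \<mu> g))" by (simp add: g_def)
  also have "\<dots> = (\<Sum>e\<leftarrow>es. g (rep \<mu> e))"
    using linear by (intro arg_cong[where f = sum_list] map_cong refl rep_swap[OF _ g]) auto
  also have "\<dots> = (\<Sum>e\<leftarrow>es. u (rep \<mu> e))"
    by (intro arg_cong[where f = sum_list] map_cong refl g_rep)
  also have "\<dots> = (\<Sum>e\<leftarrow>es. e (rep \<mu> u))"
    using linear by (intro arg_cong[where f = sum_list] map_cong refl rep_swap[OF linear_u]) auto
  also have "\<dots> = u (rep \<mu> g)"
    using rep_swap[OF g linear_u] by (simp add: g_def)
  finally show ?thesis .
qed

lemma complement_self_eq_unit:
  assumes g: "linear g" and self: "g (rep \<mu> g) = u (rep \<mu> g)"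
  defines "f \<equiv> \<lambda>x. u x - g x"
  shows "f (rep \<mu> f) = u (rep \<mu> f)"
proof -
  have f: "linear f" unfolding f_def by (intro linear_compose_sub linear_u g)
  have "g (rep \<mu> f) = f (rep \<mu> g)" by (rule rep_swap[OF g f])
  also have "\<dots> = 0" using self by (simp add: f_def)
  finally show ?thesis by (simp add: f_def)
qed

lemma ideal_observable_self_eq_unit:
  assumes ideal: "ideal_observable \<Omega> u A f" and a: "a \<in> A"
  shows "f a (rep \<mu> (f a)) = u (rep \<mu> (f a))"
proof -
  have fa: "f a \<in> effects \<Omega>"
    using ideal a by (simp add: ideal_observable_def observable_def)
  obtain es where es: "\<forall>e\<in>set es. pure_effect \<Omega> e \<and> indecomposable \<Omega> e"
    and cases: "f a = (\<lambda>x. \<Sum>e\<leftarrow>es. e x) \<or> f a = (\<lambda>x. u x - (\<Sum>e\<leftarrow>es. e x))"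
    using ideal a unfolding ideal_observable_def by blast
  have "\<forall>e\<in>set es. linear e"
    using es effects_linear unfolding pure_effect_def by blast
  then have "linear (\<lambda>x. \<Sum>e\<leftarrow>es. e x)" by (rule linear_sum_list_fun)
  moreover have "\<forall>x\<in>\<Omega>. (\<Sum>e\<leftarrow>es. e x) \<le> 1"
    using cases effects_bounds[OF fa] unit by (fastforce simp: unit_effect_def)
  ultimately show ?thesis
    using cases sum_pure_indecomposable_self_eq_unit[OF es] complement_self_eq_unit by auto
qed

end

theorem lemma3p2:
  fixes \<Omega> :: "(real^'n) set" and \<mu> :: "(real^'n^'n) measure"
    and u :: "real^'n \<Rightarrow> real" and \<omega>M :: "real^'n"
  assumes "state_space \<Omega>"
    and "haar_GL \<Omega> \<mu>"
    and "transitive_ss \<Omega>"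
    and "\<omega>M \<in> \<Omega>" and "\<forall>T \<in> GLset \<Omega>. T *v \<omega>M = \<omega>M" and "\<omega>M \<bullet> \<omega>M = 1"
    and "self_dual_GL \<Omega> \<mu>"
    and "unit_effect \<Omega> u"
  shows "(\<forall>e \<in> effects \<Omega>. e \<noteq> (\<lambda>x. 0) \<longrightarrow>
            (1 / ipGL \<mu> (rep \<mu> u) (rep \<mu> e)) *\<^sub>R rep \<mu> e \<in> \<Omega>)
       \<and> (\<forall>(A :: 'a set) f. ideal_observable \<Omega> u A f \<longrightarrow>
            (\<forall>a \<in> A. f a \<noteq> (\<lambda>x. 0) \<longrightarrow>
               ipGL \<mu> (rep \<mu> (f a))
                 ((1 / ipGL \<mu> (rep \<mu> u) (rep \<mu> (f a))) *\<^sub>R rep \<mu> (f a)) = 1))"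
proof -
  interpret transitive_self_dual \<Omega> \<mu> u
    using assms by unfold_locales
  have u_rep: "ipGL \<mu> (rep \<mu> u) x = u x" for x by (rule rep_ipGL[OF linear_u])
  have u_rep_pos: "0 < u (rep \<mu> e)" if "e \<in> effects \<Omega>" "e \<noteq> (\<lambda>x. 0)" for e
    using rep_nonzero_effect[OF that] by (metis u_scaleR_state)
  show ?thesis
  proof (intro conjI ballI impI allI)
    fix e assume e: "e \<in> effects \<Omega>" "e \<noteq> (\<lambda>x. 0)"
    then obtain c w where "c > 0" "w \<in> \<Omega>" "rep \<mu> e = c *\<^sub>R w" by (rule rep_nonzero_effect)
    then show "(1 / ipGL \<mu> (rep \<mu> u) (rep \<mu> e)) *\<^sub>R rep \<mu> e \<in> \<Omega>"
      by (simp add: u_rep u_scaleR_state)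
  next
    fix A :: "'a set" and f a
    assume ideal: "ideal_observable \<Omega> u A f" and a: "a \<in> A" and nonzero: "f a \<noteq> (\<lambda>x. 0)"
    then have fa: "f a \<in> effects \<Omega>" by (simp add: ideal_observable_def observable_def)
    have "f a (rep \<mu> (f a)) = u (rep \<mu> (f a))" by (rule ideal_observable_self_eq_unit[OF ideal a])
    moreover have "0 < u (rep \<mu> (f a))" by (rule u_rep_pos[OF fa nonzero])
    ultimately show "ipGL \<mu> (rep \<mu> (f a)) ((1 / ipGL \<mu> (rep \<mu> u) (rep \<mu> (f a))) *\<^sub>R rep \<mu> (f a)) = 1"
      by (simp add: u_rep bilinear_rmul[OF bilinear_ipGL] rep_ipGL[OF effects_linear[OF fa]])
  qed
qed

end
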